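(* Let $f\colon D^*\to H^3$ be a regular WCF-end of a flat front with multiplicity $m$ and ratio of Gauss maps $\alpha$, and suppose $(G,\omega)$ is a dominant pair. Then \[\mu=-\frac{1+\alpha}{1-\alpha}m-1\ (\le -1),\qquad\text{that is,}\qquad \alpha=\frac{1+\mu+m}{1+\mu-m},\] where $\mu=\mathrm{ord}_0|\omega|^2$. In particular $\mu_*=\mathrm{ord}_0|\theta|^2$ satisfies $\mu+\mu_*\ge-2$ and $\mu_*\ge-1$ (and $\mu\le -1$).
   Context: Flat front on $D^*=\{0<|z|<1\}$: $f=\mathcal{E}\mathcal{E}^*\colon D^*\to H^3=\{uu^*:u\in SL(2,\mathbb{C})\}$ with $\mathcal{E}=(E_{ij})$ a holomorphic immersion of the universal cover into $SL(2,\mathbb{C})$, $\mathcal{E}^{-1}d\mathcal{E}=\begin{pmatrix}0&\theta\\ \omega&0\end{pmatrix}$ (canonical forms), $z$ compatible with $ds^2_{1,1}=|\omega|^2+|\theta|^2$. Hyperbolic Gauss maps $G=E_{11}/E_{21}$, $G_*=E_{12}/E_{22}$. WCF-end: $ds^2_{1,1}$ complete at $0$ with finite total curvature near $0$; then $\omega=z^{\mu}\omega_1(z)dz$, $\theta=z^{\mu_*}\theta_1(z)dz$ with $\mu,\mu_*\in\mathbb{R}$, $\omega_1,\theta_1$ holomorphic and non-zero at $0$; $\mathrm{ord}_0|\omega|^2=\mu$, $\mathrm{ord}_0|\theta|^2=\mu_*$. Regular: $G,G_*$ have at most poles at $0$ (then $G(0)=G_*(0)$). Multiplicity: after an isometry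 assume $G(0)\neq\infty$; $m=\min\{\mathrm{ord}_0G',\mathrm{ord}_0G_*'\}+1$, or the ramification order of the non-constant one if one of them is constant. Ratio of Gauss maps: $\alpha=(dG_*/dG)(0)$ if $|(dG_*/dG)(0)|\le1$, else $\alpha=(dG/dG_* )(0)$; it is real, $\alpha\in[-1,1)$. The pair $(G,\omega)$ is dominant if $|(dG_*/dG)(0)|\le1$. *)

theory Defs
  imports "HOL-Complex_Analysis.Complex_Analysis"
begin

text \<open>The universal cover of the punctured disk D* = {0 < |z| < 1} is parametrised
  by the left half plane {w. Re w < 0} via z = exp w; the deck transformation is
  w \<mapsto> w + 2 pi i.\<close>

definition left_halfplane :: "complex set" where
  "left_halfplane = {w. Re w < 0}"

definition punctured_disk :: "complex set" where
  "punctured_disk = ball 0 1 - {0}"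

definition adj2 :: "complex^2^2 \<Rightarrow> complex^2^2" where
  "adj2 A = (\<chi> i j. cnj (A $ j $ i))"

definition canon_mat :: "complex \<Rightarrow> complex \<Rightarrow> complex^2^2" where
  "canon_mat om th = (\<chi> i j. if i = 1 \<and> j = 2 then th else if i = 2 \<and> j = 1 then om else 0)"

text \<open>Density rho of ds^2_{1,1} = |omega|^2 + |theta|^2 = rho^2 |dz|^2 on D*, where on
  the cover omega = om(w) dw, theta = th(w) dw and dz = z dw.\<close>
definition metric_density :: "(complex \<Rightarrow> complex) \<Rightarrow> (complex \<Rightarrow> complex) \<Rightarrow> complex \<Rightarrow> real" where
  "metric_density om th z = sqrt ((cmod (om (Ln z) / z))\<^sup>2 + (cmod (th (Ln z) / z))\<^sup>2)"

definition complete_at_zero :: "(complex \<Rightarrow> real) \<Rightarrow> bool" where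
  "complete_at_zero \<rho> \<longleftrightarrow>
     (\<forall>\<gamma> :: real \<Rightarrow> complex.
        \<gamma> ` {0..<1} \<subseteq> punctured_disk \<and>
        (\<forall>b\<in>{0<..<1}. \<gamma> piecewise_C1_differentiable_on {0..b}) \<and>
        (\<gamma> \<longlongrightarrow> 0) (at_left 1)
        \<longrightarrow> filterlim (\<lambda>b. integral {0..b} (\<lambda>t. \<rho> (\<gamma> t) * norm (vector_derivative \<gamma> (at t))))
              at_top (at_left 1))"

definition laplacian :: "(complex \<Rightarrow> real) \<Rightarrow> complex \<Rightarrow> real" where
  "laplacian u z =
     deriv (\<lambda>x. deriv (\<lambda>s. u (Complex s (Im z))) x) (Re z) +
     deriv (\<lambda>y. deriv (\<lambda>t. u (Complex (Re z) t)) y) (Im z)"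

text \<open>Finite total curvature near 0 of rho^2 |dz|^2: |K| dA = |Laplacian(log rho)| dx dy.\<close>
definition finite_total_curvature_at_zero :: "(complex \<Rightarrow> real) \<Rightarrow> bool" where
  "finite_total_curvature_at_zero \<rho> \<longleftrightarrow>
     (\<exists>r>0. (\<lambda>z. \<bar>laplacian (\<lambda>z. ln (\<rho> z)) z\<bar>) integrable_on (ball 0 r - {0}))"

text \<open>Multiplicity of a regular end (normalised so that G(0) is finite):
  min(ord_0 G', ord_0 G_*') + 1, or the ramification order ord_0 g' + 1 of the
  non-constant one g if the other is constant.\<close>
definition locally_constant_at_zero :: "(complex \<Rightarrow> complex) \<Rightarrow> bool" where
  "locally_constant_at_zero g \<longleftrightarrow> (\<forall>\<^sub>F z in at 0. deriv g z = 0)"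

definition end_multiplicity :: "(complex \<Rightarrow> complex) \<Rightarrow> (complex \<Rightarrow> complex) \<Rightarrow> int" where
  "end_multiplicity G Gs =
     (if locally_constant_at_zero G then zorder (deriv Gs) 0 + 1
      else if locally_constant_at_zero Gs then zorder (deriv G) 0 + 1
      else min (zorder (deriv G) 0) (zorder (deriv Gs) 0) + 1)"

end

theory Submission
  imports Defs
begin

(*
  Write z = exp w on the universal cover.  The canonical equation E^-1 dE = [[0, th], [om, 0]]
  together with det E = 1 gives, for e = E21 and f = E22 (om, th being the dw-coefficients of
  the canonical forms), the Weierstrass-type relations
      z G' e^2 = - om,     z Gs' f^2 = th,     (G - Gs) e f = 1.
  Differentiating the first two logarithmically eliminates E:
      z G''/G' - 2 z G'/(G - Gs) = mu + z om1'/om1,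
      z Gs''/Gs' + 2 z Gs'/(G - Gs) = mus + z th1'/th1.
  As z tends to 0, a logarithmic derivative z h'/h tends to the order of h at 0, so with
  L = lim z G'/(G - Gs) one gets mu = ord G' - 2 L, mus = ord Gs' + 2 alpha L and
  ord (G - Gs) = (1 - alpha) L.  Completeness of the metric rules out mu, mus >= 0, which forces
  L ~= 0, hence ord (G - Gs) = ord G' + 1 = m; the rest is elementary algebra.
*)

section \<open>Orders and logarithmic derivatives at an isolated singularity\<close>

lemma tendsto_logderiv_zorder:
  fixes f :: "complex \<Rightarrow> complex"
  assumes "isolated_singularity_at f 0" "not_essential f 0" "\<exists>\<^sub>F z in at 0. f z \<noteq> 0"
  shows "((\<lambda>z. z * deriv f z / f z) \<longlongrightarrow> of_int (zorder f 0)) (at 0)"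
proof -
  define k where "k = zorder f 0"
  define h where "h = zor_poly f 0"
  obtain r where r: "r > 0" "h holomorphic_on cball 0 r" "h 0 \<noteq> 0"
    and f_eq: "\<And>w. w \<in> cball 0 r - {0} \<Longrightarrow> f w = h w * w powi k \<and> h w \<noteq> 0"
    using zorder_exist[OF assms] unfolding k_def h_def by auto
  have h_holo: "h holomorphic_on ball 0 r"
    using r(2) by (rule holomorphic_on_subset) auto
  have logderiv_eq: "z * deriv f z / f z = z * deriv h z / h z + of_int k"
    if z: "z \<in> ball 0 r - {0}" for z
  proof -
    have "((\<lambda>w. h w * w powi k) has_field_derivative
        deriv h z * z powi k + h z * (of_int k * z powi (k - 1))) (at z)"
      using z by (auto intro!: derivative_eq_intros holomorphic_derivI[OF h_holo])
    hence "(f has_field_derivative deriv h z * z powi k + h z * (of_int k * z powi (k - 1))) (at z)"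
      by (rule has_field_derivative_transform_within_open[where S = "ball 0 r - {0}"])
         (use z f_eq in auto)
    hence "deriv f z = deriv h z * z powi k + h z * (of_int k * z powi (k - 1))"
      by (rule DERIV_imp_deriv)
    moreover have "z powi (k - 1) * z = z powi k"
      using z by (intro power_int_minus_mult) auto
    moreover have "z powi k \<noteq> 0" "h z \<noteq> 0"
      using z f_eq[of z] by auto
    ultimately show ?thesis
      using f_eq[of z] z by (simp add: field_simps)
  qed
  have "continuous_on (ball 0 r) h" "continuous_on (ball 0 r) (deriv h)"
    using h_holo by (auto intro!: holomorphic_on_imp_continuous_on holomorphic_deriv)
  hence "isCont h 0" "isCont (deriv h) 0"
    using r(1) by (simp_all add: continuous_on_eq_continuous_at)
  hence "((\<lambda>z. z * deriv h z / h z + of_int k) \<longlongrightarrow> 0 * deriv h 0 / h 0 + of_int k) (at 0)"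
    using r(3) by (intro tendsto_intros) (auto simp: isCont_def)
  moreover have "\<forall>\<^sub>F z in at 0. z \<in> ball 0 r - {0}"
    using r(1) by (intro eventually_at_in_open) auto
  hence "\<forall>\<^sub>F z in at 0. z * deriv h z / h z + of_int k = z * deriv f z / f z"
    by eventually_elim (simp add: logderiv_eq)
  ultimately show ?thesis
    unfolding k_def by (auto intro: Lim_transform_eventually)
qed

lemma
  fixes f :: "complex \<Rightarrow> complex"
  assumes "isolated_singularity_at f z" "(f \<longlongrightarrow> L) (at z)" "\<exists>\<^sub>F w in at z. f w \<noteq> 0"
  shows zorder_nonneg_of_tendsto: "zorder f z \<ge> 0"
    and zorder_eq_0_iff_tendsto: "zorder f z = 0 \<longleftrightarrow> L \<noteq> 0"
proof -
  have analytic: "remove_sings f analytic_on {z}"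
    by (rule remove_sings_analytic_at[OF assms(1,2)])
  have "\<exists>\<^sub>F w in at z. remove_sings f w \<noteq> 0"
    by (rule frequently_rev_mp[OF assms(3)],
        rule eventually_mono[OF eventually_remove_sings_eq_at[OF assms(1)]]) auto
  with analytic show "zorder f z \<ge> 0" "zorder f z = 0 \<longleftrightarrow> L \<noteq> 0"
    using zorder_ge_0 zorder_eq_0_iff remove_sings_eqI[OF assms(2)]
    by (simp_all add: zorder_remove_sings[OF assms(1), symmetric])
qed

lemma zorder_ident_0: "zorder (\<lambda>z::complex. z) 0 = 1"
  by (rule zorder_eqI[of UNIV _ "\<lambda>_. 1"]) auto

lemma tendsto_logderiv_analytic_nonzero:
  fixes h :: "complex \<Rightarrow> complex"
  assumes "h analytic_on {0}" "h 0 \<noteq> 0"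
  shows "((\<lambda>z. z * deriv h z / h z) \<longlongrightarrow> 0) (at 0)"
proof -
  have "isCont h 0" "isCont (deriv h) 0"
    using assms(1) by (simp_all add: analytic_at_imp_isCont analytic_deriv)
  hence "((\<lambda>z. z * deriv h z / h z) \<longlongrightarrow> 0 * deriv h 0 / h 0) (at 0)"
    using assms(2) by (intro tendsto_intros) (auto simp: isCont_def)
  thus ?thesis
    by simp
qed

section \<open>Derivatives along the exponential map\<close>

lemma not_isCont_quotient_at_simple_zero:
  fixes F a b :: "complex \<Rightarrow> complex"
  assumes "(b has_field_derivative b') (at w)" "b w = 0" "b' \<noteq> 0"
    and "isCont a w" "a w \<noteq> 0"
    and "\<forall>\<^sub>F v in at w. F v = a v / b v"
  shows "\<not> isCont F w"
proof
  assume F_cont: "isCont F w"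
  have "((\<lambda>v. (b v - b w) / (v - w)) \<longlongrightarrow> b') (at w)"
    using assms(1) by (simp add: has_field_derivative_iff)
  hence "\<forall>\<^sub>F v in at w. (b v - b w) / (v - w) \<noteq> 0"
    using assms(3) by (rule tendsto_imp_eventually_ne)
  hence "\<forall>\<^sub>F v in at w. F v * b v = a v"
    using assms(6) by eventually_elim (use assms(2) in auto)
  moreover have "((\<lambda>v. F v * b v) \<longlongrightarrow> F w * b w) (at w)"
    using F_cont DERIV_isCont[OF assms(1)] by (intro tendsto_intros) (auto simp: isCont_def)
  ultimately have "(a \<longlongrightarrow> 0) (at w)"
    using assms(2) by (auto intro: Lim_transform_eventually)
  with assms(4,5) show False
    by (metis isCont_def at_neq_bot tendsto_unique)
qed

lemma deriv_comp_exp_of_quotient: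
  fixes g a b :: "complex \<Rightarrow> complex"
  assumes "\<forall>\<^sub>F v in nhds w. g (exp v) = a v / b v"
    and "(a has_field_derivative A) (at w)" "(b has_field_derivative B) (at w)" "b w \<noteq> 0"
    and "g field_differentiable at (exp w)"
  shows "exp w * deriv g (exp w) * b w ^ 2 = A * b w - a w * B"
proof -
  have "((\<lambda>v. g (exp v)) has_field_derivative deriv g (exp w) * exp w) (at w)"
    using assms(5) by (auto intro!: DERIV_chain2[OF _ DERIV_exp] simp: field_differentiable_derivI)
  moreover have "((\<lambda>v. g (exp v)) has_field_derivative (A * b w - a w * B) / (b w * b w)) (at w)"
    by (subst DERIV_cong_ev[OF refl assms(1) refl]) (rule DERIV_divide[OF assms(2,3,4)])
  ultimately have "deriv g (exp w) * exp w = (A * b w - a w * B) / (b w * b w)"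
    by (rule DERIV_unique)
  with assms(4) show ?thesis
    by (simp add: field_simps power2_eq_square)
qed

lemma logderiv_of_exp_relation:
  fixes g h b :: "complex \<Rightarrow> complex" and c \<mu> :: complex
  assumes rel: "\<forall>\<^sub>F v in nhds w.
      exp v * deriv g (exp v) * b v ^ 2 = c * exp (\<mu> * v) * h (exp v) * exp v"
    and b_deriv: "(b has_field_derivative B) (at w)"
    and "deriv g field_differentiable at (exp w)" "h field_differentiable at (exp w)"
    and "deriv g (exp w) \<noteq> 0" "b w \<noteq> 0"
  shows "exp w * deriv (deriv g) (exp w) / deriv g (exp w) + 2 * B / b w
           = \<mu> + exp w * deriv h (exp w) / h (exp w)"
proof -
  define z where "z = exp w"
  define P where "P = z * deriv g z * b w ^ 2"
  have "P \<noteq> 0"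
    using assms(5,6) by (simp add: P_def z_def)
  have P_eq: "P = c * exp (\<mu> * w) * h z * z"
    using eventually_nhds_x_imp_x[OF rel] by (simp add: P_def z_def)
  hence "h z \<noteq> 0"
    using \<open>P \<noteq> 0\<close> by auto
  have "((\<lambda>v. deriv g (exp v)) has_field_derivative deriv (deriv g) z * z) (at w)"
    unfolding z_def using assms(3)
    by (intro DERIV_chain2[OF _ DERIV_exp] field_differentiable_derivI)
  hence "((\<lambda>v. exp v * deriv g (exp v) * b v ^ 2) has_field_derivative
      P * (1 + z * deriv (deriv g) z / deriv g z + 2 * B / b w)) (at w)"
    using assms(5,6) unfolding P_def z_def
    by (auto intro!: derivative_eq_intros b_deriv simp: field_simps power2_eq_square)
  moreover have "((\<lambda>v. h (exp v)) has_field_derivative deriv h z * z) (at w)"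
    unfolding z_def using assms(4)
    by (intro DERIV_chain2[OF _ DERIV_exp] field_differentiable_derivI)
  hence "((\<lambda>v. c * exp (\<mu> * v) * h (exp v) * exp v) has_field_derivative
      P * (\<mu> + z * deriv h z / h z + 1)) (at w)"
    using \<open>h z \<noteq> 0\<close> unfolding P_eq z_def by (auto intro!: derivative_eq_intros simp: field_simps)
  hence "((\<lambda>v. exp v * deriv g (exp v) * b v ^ 2) has_field_derivative
      P * (\<mu> + z * deriv h z / h z + 1)) (at w)"
    by (subst DERIV_cong_ev[OF refl rel refl])
  ultimately have "P * (1 + z * deriv (deriv g) z / deriv g z + 2 * B / b w)
      = P * (\<mu> + z * deriv h z / h z + 1)"
    by (rule DERIV_unique)
  with \<open>P \<noteq> 0\<close> show ?thesis
    unfolding z_def by simp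
qed

section \<open>Incompleteness for non-negative exponents\<close>

lemma not_complete_at_zero_if_bounded_on_radius:
  assumes M: "0 \<le> M" and bounded: "\<And>x. 0 < x \<Longrightarrow> x \<le> 1 / 2 \<Longrightarrow> \<rho> (of_real x) \<le> M"
  shows "\<not> complete_at_zero \<rho>"
proof
  assume complete: "complete_at_zero \<rho>"
  define \<gamma> where "\<gamma> = (\<lambda>t::real. complex_of_real ((1 - t) / 2))"
  have integral_le: "integral {0..b} (\<lambda>t. \<rho> (\<gamma> t) / 2) \<le> M" if "0 < b" "b < 1" for b
  proof (cases "(\<lambda>t. \<rho> (\<gamma> t) / 2) integrable_on {0..b}")
    case True
    have "integral {0..b} (\<lambda>t. \<rho> (\<gamma> t) / 2) \<le> integral {0..b} (\<lambda>t. M / 2)"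
      using that by (intro integral_le True)
        (auto simp: \<gamma>_def intro!: bounded simp del: of_real_diff of_real_divide)
    also have "\<dots> \<le> M"
      using that M mult_left_le_one_le[of M b] by simp
    finally show ?thesis .
  next
    case False
    with M show ?thesis
      by (metis not_integrable_integral)
  qed
  have "(\<gamma> has_vector_derivative - 1 / 2) (at t)" for t
    unfolding \<gamma>_def has_vector_derivative_def
    by (auto intro!: derivative_eq_intros simp: scaleR_conv_of_real)
  hence \<gamma>': "vector_derivative \<gamma> (at t) = - 1 / 2" for t
    by (rule vector_derivative_at)
  have "\<gamma> C1_differentiable_on {0..b}" for b
    unfolding C1_differentiable_on_eq using \<gamma>'
    by (auto simp: \<gamma>_def intro!: derivative_eq_intros continuous_intros)
  moreover have "\<gamma> ` {0..<1} \<subseteq> punctured_disk"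
    by (auto simp: \<gamma>_def punctured_disk_def simp del: of_real_diff of_real_divide)
  moreover have "(\<gamma> \<longlongrightarrow> 0) (at_left 1)"
    unfolding \<gamma>_def by (rule tendsto_eq_intros refl | simp)+
  ultimately have "filterlim (\<lambda>b. integral {0..b} (\<lambda>t. \<rho> (\<gamma> t) * norm (vector_derivative \<gamma> (at t))))
      at_top (at_left 1)"
    using complete unfolding complete_at_zero_def by (blast intro: C1_differentiable_imp_piecewise)
  hence "\<forall>\<^sub>F b in at_left 1. integral {0..b} (\<lambda>t. \<rho> (\<gamma> t) / 2) > M"
    by (simp add: \<gamma>' filterlim_at_top_dense)
  moreover have "\<forall>\<^sub>F b in at_left (1::real). 0 < b \<and> b < 1"
    by (rule eventually_at_leftI[of 0]) auto
  ultimately have "\<forall>\<^sub>F b in at_left (1::real). False"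
    by eventually_elim (use integral_le in force)
  thus False
    by (simp add: trivial_limit_at_left_real)
qed

lemma not_complete_at_zero_if_exponents_nonneg:
  fixes om th om1 th1 :: "complex \<Rightarrow> complex" and \<mu> \<mu>s :: real
  assumes "\<mu> \<ge> 0" "\<mu>s \<ge> 0"
    and "om1 holomorphic_on ball 0 1" "th1 holomorphic_on ball 0 1"
    and om_form: "\<And>w. w \<in> left_halfplane \<Longrightarrow> om w = exp (of_real \<mu> * w) * om1 (exp w) * exp w"
    and th_form: "\<And>w. w \<in> left_halfplane \<Longrightarrow> th w = exp (of_real \<mu>s * w) * th1 (exp w) * exp w"
  shows "\<not> complete_at_zero (metric_density om th)"
proof -
  have "compact (cball (0::complex) (1/2))" "cball (0::complex) (1/2) \<subseteq> ball 0 1"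
    by auto
  hence "bounded (om1 ` cball 0 (1/2))" "bounded (th1 ` cball 0 (1/2))"
    using assms(3,4) by (auto intro!: compact_imp_bounded compact_continuous_image
        holomorphic_on_imp_continuous_on intro: holomorphic_on_subset)
  then obtain B1 B2 where B: "\<And>z. z \<in> cball 0 (1/2) \<Longrightarrow> cmod (om1 z) \<le> B1 \<and> cmod (th1 z) \<le> B2"
    unfolding bounded_iff by (meson image_eqI)
  have "metric_density om th (of_real x) \<le> sqrt (B1\<^sup>2 + B2\<^sup>2)" if x: "0 < x" "x \<le> 1/2" for x
  proof -
    have w: "complex_of_real (ln x) \<in> left_halfplane"
      using x by (simp add: left_halfplane_def)
    have Ln: "Ln (complex_of_real x) = of_real (ln x)"
      using x by (simp add: Ln_of_real)
    have exp_ln: "exp (complex_of_real (ln x)) = of_real x"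
      using x by (simp add: exp_of_real)
    have "exp (\<mu> * ln x) \<le> 1" "exp (\<mu>s * ln x) \<le> 1"
      using x assms(1,2) by (simp_all add: mult_nonneg_nonpos)
    moreover have "cmod (om1 (of_real x)) \<le> B1" "cmod (th1 (of_real x)) \<le> B2"
      using B[of "of_real x"] x by (simp_all add: norm_of_real)
    ultimately have "cmod (om (Ln (of_real x)) / of_real x) \<le> B1"
      "cmod (th (Ln (of_real x)) / of_real x) \<le> B2"
      using x unfolding Ln om_form[OF w] th_form[OF w] exp_ln
      by (auto simp: norm_mult intro: order.trans[OF mult_left_le_one_le]
          simp flip: of_real_mult exp_of_real)
    thus ?thesis
      unfolding metric_density_def by (intro real_sqrt_le_mono add_mono power_mono) auto
  qed
  thus ?thesis
    by (intro not_complete_at_zero_if_bounded_on_radius[of "sqrt (B1\<^sup>2 + B2\<^sup>2)"]) auto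
qed

section \<open>The Gauss map relations near the end\<close>

lemma eventually_nhds_of_eventually_at:
  fixes x :: "'a :: t1_space"
  assumes "\<forall>\<^sub>F z in at x. P z"
  shows "\<forall>\<^sub>F y in at x. \<forall>\<^sub>F z in nhds y. P z"
proof -
  from assms obtain S where S: "open S" "x \<in> S" "\<And>z. z \<in> S \<Longrightarrow> z \<noteq> x \<Longrightarrow> P z"
    unfolding eventually_at_topological by blast
  have "open (S - {x})"
    using S(1) by (intro open_Diff) auto
  hence "\<forall>\<^sub>F z in nhds y. P z" if "y \<in> S" "y \<noteq> x" for y
    using eventually_nhds_in_open[of "S - {x}" y] S that by (auto elim: eventually_mono)
  with S(1,2) show ?thesis
    unfolding eventually_at_topological by blast
qed

lemma exp_in_unit_ball_iff: "exp w \<in> ball 0 1 \<longleftrightarrow> w \<in> left_halfplane"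
  by (simp add: left_halfplane_def norm_exp_eq_Re)

lemma open_left_halfplane: "open left_halfplane"
  unfolding left_halfplane_def by (rule open_halfspace_Re_lt)

lemma canon_mat_mult_entries:
  "(A ** canon_mat om th) $ 1 $ 1 = A $ 1 $ 2 * om"
  "(A ** canon_mat om th) $ 2 $ 1 = A $ 2 $ 2 * om"
  "(A ** canon_mat om th) $ 1 $ 2 = A $ 1 $ 1 * th"
  "(A ** canon_mat om th) $ 2 $ 2 = A $ 2 $ 1 * th"
  by (simp_all add: matrix_matrix_mult_def canon_mat_def sum_2)

locale canonical_lift =
  fixes E :: "complex \<Rightarrow> complex^2^2"
    and om th G Gs om1 th1 :: "complex \<Rightarrow> complex"
    and \<mu> \<mu>s :: real
  assumes E_canonical: "\<And>w i j. w \<in> left_halfplane \<Longrightarrow>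
      ((\<lambda>v. E v $ i $ j) has_field_derivative ((E w ** canon_mat (om w) (th w)) $ i $ j)) (at w)"
    and E_SL2: "\<And>w. w \<in> left_halfplane \<Longrightarrow> det (E w) = 1"
    and G_def: "\<And>w. w \<in> left_halfplane \<Longrightarrow> G (exp w) = E w $ 1 $ 1 / E w $ 2 $ 1"
    and Gs_def: "\<And>w. w \<in> left_halfplane \<Longrightarrow> Gs (exp w) = E w $ 1 $ 2 / E w $ 2 $ 2"
    and om1_holo: "om1 holomorphic_on ball 0 1" and om1_0: "om1 0 \<noteq> 0"
    and th1_holo: "th1 holomorphic_on ball 0 1" and th1_0: "th1 0 \<noteq> 0"
    and om_form: "\<And>w. w \<in> left_halfplane \<Longrightarrow> om w = exp (of_real \<mu> * w) * om1 (exp w) * exp w"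
    and th_form: "\<And>w. w \<in> left_halfplane \<Longrightarrow> th w = exp (of_real \<mu>s * w) * th1 (exp w) * exp w"
    and G_iso: "isolated_singularity_at G 0"
    and Gs_iso: "isolated_singularity_at Gs 0"
begin

lemma E_entry_derivs:
  assumes "w \<in> left_halfplane"
  shows "((\<lambda>v. E v $ 1 $ 1) has_field_derivative E w $ 1 $ 2 * om w) (at w)"
    and "((\<lambda>v. E v $ 2 $ 1) has_field_derivative E w $ 2 $ 2 * om w) (at w)"
    and "((\<lambda>v. E v $ 1 $ 2) has_field_derivative E w $ 1 $ 1 * th w) (at w)"
    and "((\<lambda>v. E v $ 2 $ 2) has_field_derivative E w $ 2 $ 1 * th w) (at w)"
  using E_canonical[OF assms] by (metis canon_mat_mult_entries)+

lemma det_E: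
  assumes "w \<in> left_halfplane"
  shows "E w $ 1 $ 1 * E w $ 2 $ 2 - E w $ 1 $ 2 * E w $ 2 $ 1 = 1"
  using E_SL2[OF assms] by (simp add: det_2)

definition regular_point :: "complex \<Rightarrow> bool" where
  "regular_point z \<longleftrightarrow> z \<in> ball 0 1 \<and> G analytic_on {z} \<and> Gs analytic_on {z} \<and> om1 z \<noteq> 0 \<and> th1 z \<noteq> 0"

lemma eventually_regular_point: "\<forall>\<^sub>F z in at 0. regular_point z"
proof -
  have "continuous_on (ball 0 1) om1" "continuous_on (ball 0 1) th1"
    using om1_holo th1_holo by (simp_all add: holomorphic_on_imp_continuous_on)
  hence "isCont om1 0" "isCont th1 0"
    by (simp_all add: continuous_on_eq_continuous_at)
  hence "\<forall>\<^sub>F z in at 0. om1 z \<noteq> 0" "\<forall>\<^sub>F z in at 0. th1 z \<noteq> 0"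
    using tendsto_imp_eventually_ne[OF isContD] om1_0 th1_0 by blast+
  moreover have "\<forall>\<^sub>F z in at 0. z \<in> ball (0::complex) 1"
    by (intro eventually_at_in_open') auto
  ultimately show ?thesis
    using G_iso Gs_iso unfolding regular_point_def isolated_singularity_at_altdef
    by eventually_elim auto
qed

lemma regular_point_exp_imp_left_halfplane: "regular_point (exp w) \<Longrightarrow> w \<in> left_halfplane"
  by (simp add: regular_point_def flip: exp_in_unit_ball_iff)

lemma canonical_forms_nonzero:
  assumes "regular_point (exp w)"
  shows "om w \<noteq> 0" "th w \<noteq> 0"
  using assms om_form th_form regular_point_exp_imp_left_halfplane[OF assms]
  by (auto simp: regular_point_def)

(* A zero of E21 would be simple, as E21' = E22 om and E11 E22 = 1 there, so G = E11 / E21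
   would have a pole; likewise for E22 and Gs. *)
lemma lower_entries_nonzero:
  assumes reg: "regular_point (exp w)"
  shows "E w $ 2 $ 1 \<noteq> 0" "E w $ 2 $ 2 \<noteq> 0"
proof -
  have w: "w \<in> left_halfplane"
    using reg by (rule regular_point_exp_imp_left_halfplane)
  have near_w: "\<forall>\<^sub>F v in at w. v \<in> left_halfplane"
    using w open_left_halfplane by (rule eventually_at_in_open'[rotated])
  have "isCont G (exp w)" "isCont Gs (exp w)"
    using reg by (simp_all add: regular_point_def analytic_at_imp_isCont)
  hence G_cont: "isCont (\<lambda>v. G (exp v)) w" and Gs_cont: "isCont (\<lambda>v. Gs (exp v)) w"
    by (simp_all add: isCont_o2[OF isCont_exp])
  show "E w $ 2 $ 1 \<noteq> 0"
  proof
    assume zero: "E w $ 2 $ 1 = 0"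
    hence "E w $ 1 $ 1 * E w $ 2 $ 2 = 1"
      using det_E[OF w] by simp
    moreover have "\<forall>\<^sub>F v in at w. G (exp v) = E v $ 1 $ 1 / E v $ 2 $ 1"
      using near_w by eventually_elim (rule G_def)
    ultimately have "\<not> isCont (\<lambda>v. G (exp v)) w"
      using canonical_forms_nonzero(1)[OF reg]
      by (intro not_isCont_quotient_at_simple_zero[OF E_entry_derivs(2)[OF w] zero _
            DERIV_isCont[OF E_entry_derivs(1)[OF w]]]) auto
    with G_cont show False by blast
  qed
  show "E w $ 2 $ 2 \<noteq> 0"
  proof
    assume zero: "E w $ 2 $ 2 = 0"
    hence "- (E w $ 1 $ 2 * E w $ 2 $ 1) = 1"
      using det_E[OF w] by simp
    moreover have "\<forall>\<^sub>F v in at w. Gs (exp v) = E v $ 1 $ 2 / E v $ 2 $ 2"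
      using near_w by eventually_elim (rule Gs_def)
    ultimately have "\<not> isCont (\<lambda>v. Gs (exp v)) w"
      using canonical_forms_nonzero(2)[OF reg]
      by (intro not_isCont_quotient_at_simple_zero[OF E_entry_derivs(4)[OF w] zero _
            DERIV_isCont[OF E_entry_derivs(3)[OF w]]]) auto
    with Gs_cont show False by blast
  qed
qed

lemma gauss_map_first_relations:
  assumes reg: "regular_point (exp w)"
  shows "exp w * deriv G (exp w) * (E w $ 2 $ 1)^2 = - om w"
    and "exp w * deriv Gs (exp w) * (E w $ 2 $ 2)^2 = th w"
    and "(G (exp w) - Gs (exp w)) * E w $ 2 $ 1 * E w $ 2 $ 2 = 1"
proof -
  have w: "w \<in> left_halfplane"
    using reg by (rule regular_point_exp_imp_left_halfplane)
  have near_w: "\<forall>\<^sub>F v in nhds w. v \<in> left_halfplane"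
    by (rule eventually_nhds_in_open[OF open_left_halfplane w])
  note det = det_E[OF w] and nonzero = lower_entries_nonzero[OF reg]
  have "G field_differentiable at (exp w)" "Gs field_differentiable at (exp w)"
    using reg by (auto simp: regular_point_def intro: analytic_on_imp_differentiable_at)
  moreover have "\<forall>\<^sub>F v in nhds w. G (exp v) = E v $ 1 $ 1 / E v $ 2 $ 1"
    "\<forall>\<^sub>F v in nhds w. Gs (exp v) = E v $ 1 $ 2 / E v $ 2 $ 2"
    using near_w by (auto elim!: eventually_mono simp: G_def Gs_def)
  ultimately have
    "exp w * deriv G (exp w) * (E w $ 2 $ 1)^2
       = E w $ 1 $ 2 * om w * E w $ 2 $ 1 - E w $ 1 $ 1 * (E w $ 2 $ 2 * om w)"
    "exp w * deriv Gs (exp w) * (E w $ 2 $ 2)^2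
       = E w $ 1 $ 1 * th w * E w $ 2 $ 2 - E w $ 1 $ 2 * (E w $ 2 $ 1 * th w)"
    using nonzero by (auto intro!: deriv_comp_exp_of_quotient E_entry_derivs w)
  with det show "exp w * deriv G (exp w) * (E w $ 2 $ 1)^2 = - om w"
    "exp w * deriv Gs (exp w) * (E w $ 2 $ 2)^2 = th w"
    by (simp_all add: algebra_simps)
  show "(G (exp w) - Gs (exp w)) * E w $ 2 $ 1 * E w $ 2 $ 2 = 1"
    using det nonzero by (simp add: G_def[OF w] Gs_def[OF w] field_simps)
qed

lemma regular_point_differentiable:
  assumes "regular_point z"
  shows "deriv G field_differentiable at z" "deriv Gs field_differentiable at z"
    and "om1 field_differentiable at z" "th1 field_differentiable at z"
  using assms om1_holo th1_holo
  by (auto simp: regular_point_def intro: analytic_on_imp_differentiable_at analytic_deriv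
      holomorphic_on_imp_differentiable_at)

lemma logderiv_relation_G:
  assumes reg: "\<forall>\<^sub>F v in nhds w. regular_point (exp v)" and z: "exp w = z"
  shows "z * deriv (deriv G) z / deriv G z - 2 * (z * deriv G z / (G z - Gs z))
           = of_real \<mu> + z * deriv om1 z / om1 z"
proof -
  have reg_w: "regular_point (exp w)"
    using reg by (rule eventually_nhds_x_imp_x)
  have w: "w \<in> left_halfplane"
    using reg_w by (rule regular_point_exp_imp_left_halfplane)
  note first = gauss_map_first_relations[OF reg_w]
    and nonzero = lower_entries_nonzero[OF reg_w] canonical_forms_nonzero[OF reg_w]
  have "deriv G (exp w) \<noteq> 0"
    using first(1) nonzero by auto
  have "exp w * deriv (deriv G) (exp w) / deriv G (exp w) + 2 * (E w $ 2 $ 2 * om w) / E w $ 2 $ 1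
      = of_real \<mu> + exp w * deriv om1 (exp w) / om1 (exp w)"
  proof (rule logderiv_of_exp_relation[where c = "-1" and b = "\<lambda>v. E v $ 2 $ 1"])
    show "\<forall>\<^sub>F v in nhds w. exp v * deriv G (exp v) * (E v $ 2 $ 1)^2
        = -1 * exp (of_real \<mu> * v) * om1 (exp v) * exp v"
      using reg by eventually_elim
        (simp add: gauss_map_first_relations(1) om_form regular_point_exp_imp_left_halfplane)
  qed (use regular_point_differentiable[OF reg_w] nonzero \<open>deriv G (exp w) \<noteq> 0\<close>
         E_entry_derivs(2)[OF w] in auto)
  moreover have "om w = - (exp w * deriv G (exp w) * (E w $ 2 $ 1)^2)"
    using first(1) by simp
  hence "2 * (E w $ 2 $ 2 * om w) / E w $ 2 $ 1
      = - 2 * (exp w * deriv G (exp w) * (E w $ 2 $ 1 * E w $ 2 $ 2))"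
    using nonzero by (simp add: field_simps power2_eq_square)
  moreover have "G (exp w) - Gs (exp w) \<noteq> 0"
    using first(3) by auto
  hence "E w $ 2 $ 1 * E w $ 2 $ 2 = 1 / (G (exp w) - Gs (exp w))"
    using first(3) by (simp add: field_simps)
  ultimately show ?thesis
    using z by simp
qed

lemma logderiv_relation_Gs:
  assumes reg: "\<forall>\<^sub>F v in nhds w. regular_point (exp v)" and z: "exp w = z"
  shows "z * deriv (deriv Gs) z / deriv Gs z + 2 * (z * deriv Gs z / (G z - Gs z))
           = of_real \<mu>s + z * deriv th1 z / th1 z"
proof -
  have reg_w: "regular_point (exp w)"
    using reg by (rule eventually_nhds_x_imp_x)
  have w: "w \<in> left_halfplane"
    using reg_w by (rule regular_point_exp_imp_left_halfplane)
  note first = gauss_map_first_relations[OF reg_w]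
    and nonzero = lower_entries_nonzero[OF reg_w] canonical_forms_nonzero[OF reg_w]
  have "deriv Gs (exp w) \<noteq> 0"
    using first(2) nonzero by auto
  have "exp w * deriv (deriv Gs) (exp w) / deriv Gs (exp w) + 2 * (E w $ 2 $ 1 * th w) / E w $ 2 $ 2
      = of_real \<mu>s + exp w * deriv th1 (exp w) / th1 (exp w)"
  proof (rule logderiv_of_exp_relation[where c = 1 and b = "\<lambda>v. E v $ 2 $ 2"])
    show "\<forall>\<^sub>F v in nhds w. exp v * deriv Gs (exp v) * (E v $ 2 $ 2)^2
        = 1 * exp (of_real \<mu>s * v) * th1 (exp v) * exp v"
      using reg by eventually_elim
        (simp add: gauss_map_first_relations(2) th_form regular_point_exp_imp_left_halfplane)
  qed (use regular_point_differentiable[OF reg_w] nonzero \<open>deriv Gs (exp w) \<noteq> 0\<close>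
         E_entry_derivs(4)[OF w] in auto)
  moreover have "2 * (E w $ 2 $ 1 * th w) / E w $ 2 $ 2
      = 2 * (exp w * deriv Gs (exp w) * (E w $ 2 $ 1 * E w $ 2 $ 2))"
    using nonzero by (simp add: first(2)[symmetric] field_simps power2_eq_square)
  moreover have "G (exp w) - Gs (exp w) \<noteq> 0"
    using first(3) by auto
  hence "E w $ 2 $ 1 * E w $ 2 $ 2 = 1 / (G (exp w) - Gs (exp w))"
    using first(3) by (simp add: field_simps)
  ultimately show ?thesis
    using z by simp
qed

lemma gauss_map_relations_near_end:
  "\<forall>\<^sub>F z in at 0. deriv G z \<noteq> 0 \<and> deriv Gs z \<noteq> 0 \<and> G z \<noteq> Gs z \<and>
     z * deriv (deriv G) z / deriv G z - 2 * (z * deriv G z / (G z - Gs z))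
       = of_real \<mu> + z * deriv om1 z / om1 z \<and>
     z * deriv (deriv Gs) z / deriv Gs z + 2 * (z * deriv Gs z / (G z - Gs z))
       = of_real \<mu>s + z * deriv th1 z / th1 z"
proof -
  have "\<forall>\<^sub>F z in at (0::complex). z \<noteq> 0"
    by (simp add: eventually_at_filter)
  with eventually_nhds_of_eventually_at[OF eventually_regular_point]
  show ?thesis
  proof eventually_elim
    case (elim z)
    define w where "w = Ln z"
    have z: "exp w = z"
      using elim(2) by (simp add: w_def)
    have "((\<lambda>v. exp v) \<longlongrightarrow> z) (nhds w)"
      unfolding z[symmetric] by (rule isCont_tendsto_compose[OF isCont_exp filterlim_ident])
    with elim(1) have reg: "\<forall>\<^sub>F v in nhds w. regular_point (exp v)"
      by (rule eventually_compose_filterlim)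
    have reg_w: "regular_point (exp w)"
      using reg by (rule eventually_nhds_x_imp_x)
    have "deriv G z \<noteq> 0" "deriv Gs z \<noteq> 0" "G z \<noteq> Gs z"
      using gauss_map_first_relations[OF reg_w] canonical_forms_nonzero[OF reg_w] z by auto
    with logderiv_relation_G[OF reg z] logderiv_relation_Gs[OF reg z] show ?case
      by blast
  qed
qed

end

section \<open>Orders of the Gauss maps at the end\<close>

lemma gauss_quotient_limits:
  fixes G Gs om1 th1 :: "complex \<Rightarrow> complex" and \<mu> \<mu>s :: real
  assumes G: "G meromorphic_on {0}" and Gs: "Gs meromorphic_on {0}"
    and "om1 analytic_on {0}" "om1 0 \<noteq> 0" "th1 analytic_on {0}" "th1 0 \<noteq> 0"
    and rel: "\<forall>\<^sub>F z in at 0. deriv G z \<noteq> 0 \<and> deriv Gs z \<noteq> 0 \<and> G z \<noteq> Gs z \<and>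
       z * deriv (deriv G) z / deriv G z - 2 * (z * deriv G z / (G z - Gs z))
         = of_real \<mu> + z * deriv om1 z / om1 z \<and>
       z * deriv (deriv Gs) z / deriv Gs z + 2 * (z * deriv Gs z / (G z - Gs z))
         = of_real \<mu>s + z * deriv th1 z / th1 z"
  shows "((\<lambda>z. z * deriv G z / (G z - Gs z))
           \<longlongrightarrow> (of_int (zorder (deriv G) 0) - of_real \<mu>) / 2) (at 0)"
    and "((\<lambda>z. z * deriv Gs z / (G z - Gs z))
           \<longlongrightarrow> (of_real \<mu>s - of_int (zorder (deriv Gs) 0)) / 2) (at 0)"
proof -
  have "deriv G meromorphic_on {0}" "deriv Gs meromorphic_on {0}"
    using G Gs by (auto intro: meromorphic_intros)
  hence "isolated_singularity_at (deriv G) 0" "not_essential (deriv G) 0"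
    "isolated_singularity_at (deriv Gs) 0" "not_essential (deriv Gs) 0"
    by (simp_all add: meromorphic_at_iff)
  moreover have "\<exists>\<^sub>F z in at 0. deriv G z \<noteq> 0" "\<exists>\<^sub>F z in at 0. deriv Gs z \<noteq> 0"
    using rel by (auto intro!: eventually_frequently elim: eventually_mono)
  ultimately have
    "((\<lambda>z. z * deriv (deriv G) z / deriv G z) \<longlongrightarrow> of_int (zorder (deriv G) 0)) (at 0)"
    "((\<lambda>z. z * deriv (deriv Gs) z / deriv Gs z) \<longlongrightarrow> of_int (zorder (deriv Gs) 0)) (at 0)"
    by (simp_all add: tendsto_logderiv_zorder)
  note logderivs = this tendsto_logderiv_analytic_nonzero[OF assms(3,4)]
    tendsto_logderiv_analytic_nonzero[OF assms(5,6)]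
  have solve: "\<And>a b c q :: complex. a - 2 * q = c + b \<Longrightarrow> (a - b - c) / 2 = q"
    "\<And>a b c q :: complex. a + 2 * q = c + b \<Longrightarrow> (c + b - a) / 2 = q"
    by (simp_all add: field_simps)
  show "((\<lambda>z. z * deriv G z / (G z - Gs z))
      \<longlongrightarrow> (of_int (zorder (deriv G) 0) - of_real \<mu>) / 2) (at 0)"
  proof (rule Lim_transform_eventually)
    show "((\<lambda>z. (z * deriv (deriv G) z / deriv G z - z * deriv om1 z / om1 z - of_real \<mu>) / 2)
        \<longlongrightarrow> (of_int (zorder (deriv G) 0) - of_real \<mu>) / 2) (at 0)"
      using tendsto_divide[OF tendsto_diff[OF tendsto_diff[OF logderivs(1,3)]
          tendsto_const[of "of_real \<mu>"]] tendsto_const[of 2]]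
      by simp
    show "\<forall>\<^sub>F z in at 0.
        (z * deriv (deriv G) z / deriv G z - z * deriv om1 z / om1 z - of_real \<mu>) / 2
          = z * deriv G z / (G z - Gs z)"
      using rel by eventually_elim (blast intro: solve)
  qed
  show "((\<lambda>z. z * deriv Gs z / (G z - Gs z))
      \<longlongrightarrow> (of_real \<mu>s - of_int (zorder (deriv Gs) 0)) / 2) (at 0)"
  proof (rule Lim_transform_eventually)
    show "((\<lambda>z. (of_real \<mu>s + z * deriv th1 z / th1 z - z * deriv (deriv Gs) z / deriv Gs z) / 2)
        \<longlongrightarrow> (of_real \<mu>s - of_int (zorder (deriv Gs) 0)) / 2) (at 0)"
      using tendsto_divide[OF tendsto_diff[OF tendsto_add[OF tendsto_const[of "of_real \<mu>s"]
          logderivs(4)] logderivs(2)] tendsto_const[of 2]]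
      by simp
    show "\<forall>\<^sub>F z in at 0.
        (of_real \<mu>s + z * deriv th1 z / th1 z - z * deriv (deriv Gs) z / deriv Gs z) / 2
          = z * deriv Gs z / (G z - Gs z)"
      using rel by eventually_elim (blast intro: solve)
  qed
qed

lemma zorder_diff_eq_limit_difference:
  fixes G Gs :: "complex \<Rightarrow> complex"
  assumes G: "G meromorphic_on {0}" and Gs: "Gs meromorphic_on {0}"
    and "\<forall>\<^sub>F z in at 0. G z \<noteq> Gs z"
    and lim_G: "((\<lambda>z. z * deriv G z / (G z - Gs z)) \<longlongrightarrow> L) (at 0)"
    and lim_Gs: "((\<lambda>z. z * deriv Gs z / (G z - Gs z)) \<longlongrightarrow> Ls) (at 0)"
  shows "of_int (zorder (\<lambda>z. G z - Gs z) 0) = L - Ls"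
proof -
  have "(\<lambda>z. G z - Gs z) meromorphic_on {0}"
    using G Gs by (rule meromorphic_on_diff)
  moreover have "\<exists>\<^sub>F z in at 0. G z - Gs z \<noteq> 0"
    using assms(3) by (auto intro!: eventually_frequently elim: eventually_mono)
  ultimately have "((\<lambda>z. z * deriv (\<lambda>z. G z - Gs z) z / (G z - Gs z))
      \<longlongrightarrow> of_int (zorder (\<lambda>z. G z - Gs z) 0)) (at 0)"
    by (simp add: meromorphic_at_iff tendsto_logderiv_zorder)
  moreover have "\<forall>\<^sub>F z in at 0. G analytic_on {z} \<and> Gs analytic_on {z}"
    using G Gs by (simp add: meromorphic_at_iff isolated_singularity_at_altdef eventually_conj)
  hence "\<forall>\<^sub>F z in at 0. z * deriv G z / (G z - Gs z) - z * deriv Gs z / (G z - Gs z)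
      = z * deriv (\<lambda>z. G z - Gs z) z / (G z - Gs z)"
    by eventually_elim
      (auto simp: analytic_on_imp_differentiable_at diff_divide_distrib right_diff_distrib)
  hence "((\<lambda>z. z * deriv (\<lambda>z. G z - Gs z) z / (G z - Gs z)) \<longlongrightarrow> L - Ls) (at 0)"
    by (intro Lim_transform_eventually[OF tendsto_diff[OF lim_G lim_Gs]])
  ultimately show ?thesis
    using tendsto_unique[OF at_neq_bot] by blast
qed

lemma gauss_map_log_limits:
  fixes G Gs om1 th1 :: "complex \<Rightarrow> complex" and \<mu> \<mu>s :: real and \<alpha> :: complex
  assumes G: "G meromorphic_on {0}" and Gs: "Gs meromorphic_on {0}"
    and "om1 analytic_on {0}" "om1 0 \<noteq> 0" "th1 analytic_on {0}" "th1 0 \<noteq> 0"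
    and rel: "\<forall>\<^sub>F z in at 0. deriv G z \<noteq> 0 \<and> deriv Gs z \<noteq> 0 \<and> G z \<noteq> Gs z \<and>
       z * deriv (deriv G) z / deriv G z - 2 * (z * deriv G z / (G z - Gs z))
         = of_real \<mu> + z * deriv om1 z / om1 z \<and>
       z * deriv (deriv Gs) z / deriv Gs z + 2 * (z * deriv Gs z / (G z - Gs z))
         = of_real \<mu>s + z * deriv th1 z / th1 z"
    and ratio: "((\<lambda>z. deriv Gs z / deriv G z) \<longlongrightarrow> \<alpha>) (at 0)"
  obtains L where "((\<lambda>z. z * deriv G z / (G z - Gs z)) \<longlongrightarrow> L) (at 0)"
    and "of_real \<mu> = of_int (zorder (deriv G) 0) - 2 * L"
    and "of_real \<mu>s = of_int (zorder (deriv Gs) 0) + 2 * \<alpha> * L"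
    and "of_int (zorder (\<lambda>z. G z - Gs z) 0) = (1 - \<alpha>) * L"
proof -
  define L where "L = (of_int (zorder (deriv G) 0) - of_real \<mu>) / (2 :: complex)"
  note lim_G = gauss_quotient_limits(1)[OF assms(1-7), folded L_def]
    and lim_Gs = gauss_quotient_limits(2)[OF assms(1-7)]
  have "((\<lambda>z. z * deriv Gs z / (G z - Gs z)) \<longlongrightarrow> \<alpha> * L) (at 0)"
  proof (rule Lim_transform_eventually)
    show "((\<lambda>z. deriv Gs z / deriv G z * (z * deriv G z / (G z - Gs z))) \<longlongrightarrow> \<alpha> * L) (at 0)"
      by (intro tendsto_intros ratio lim_G)
    show "\<forall>\<^sub>F z in at 0. deriv Gs z / deriv G z * (z * deriv G z / (G z - Gs z))
        = z * deriv Gs z / (G z - Gs z)"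
      using rel by eventually_elim auto
  qed
  with lim_Gs have \<mu>s: "(of_real \<mu>s - of_int (zorder (deriv Gs) 0)) / 2 = \<alpha> * L"
    using tendsto_unique[OF at_neq_bot] by blast
  have "\<forall>\<^sub>F z in at 0. G z \<noteq> Gs z"
    using rel by (auto elim: eventually_mono)
  from zorder_diff_eq_limit_difference[OF G Gs this lim_G lim_Gs]
  have "of_int (zorder (\<lambda>z. G z - Gs z) 0) = (1 - \<alpha>) * L"
    by (simp add: \<mu>s left_diff_distrib)
  moreover have "of_real \<mu> = of_int (zorder (deriv G) 0) - 2 * L"
    "of_real \<mu>s = of_int (zorder (deriv Gs) 0) + 2 * \<alpha> * L"
    using \<mu>s by (simp_all add: L_def field_simps)
  ultimately show ?thesis
    using lim_G that by blast
qed

lemma gauss_map_order_bounds: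
  fixes G Gs :: "complex \<Rightarrow> complex" and \<alpha> L :: complex
  assumes G: "G meromorphic_on {0}" and Gs: "Gs meromorphic_on {0}" and "\<not> is_pole G 0"
    and nonzero: "\<forall>\<^sub>F z in at 0. deriv G z \<noteq> 0 \<and> deriv Gs z \<noteq> 0 \<and> G z \<noteq> Gs z"
    and ratio: "((\<lambda>z. deriv Gs z / deriv G z) \<longlongrightarrow> \<alpha>) (at 0)"
    and lim: "((\<lambda>z. z * deriv G z / (G z - Gs z)) \<longlongrightarrow> L) (at 0)"
  shows "zorder (deriv G) 0 \<ge> 0"
    and "zorder (deriv G) 0 \<le> zorder (deriv Gs) 0"
    and "\<alpha> \<noteq> 0 \<Longrightarrow> zorder (deriv Gs) 0 = zorder (deriv G) 0"
    and "zorder (\<lambda>z. G z - Gs z) 0 = zorder (deriv G) 0 + 1 \<longleftrightarrow> L \<noteq> 0"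
proof -
  have mero: "deriv G meromorphic_on {0}" "deriv Gs meromorphic_on {0}"
    "(\<lambda>z. G z - Gs z) meromorphic_on {0}" "(\<lambda>z::complex. z) meromorphic_on {0}"
    "(\<lambda>z. deriv Gs z / deriv G z) meromorphic_on {0}"
    "(\<lambda>z. z * deriv G z) meromorphic_on {0}"
    "(\<lambda>z. z * deriv G z / (G z - Gs z)) meromorphic_on {0}"
    using G Gs by (auto intro!: meromorphic_intros)
  have "\<forall>\<^sub>F z in at 0. z \<noteq> 0 \<and> deriv G z \<noteq> 0 \<and> deriv Gs z \<noteq> 0 \<and> G z \<noteq> Gs z"
    using nonzero by (auto simp: eventually_at_filter elim: eventually_mono)
  hence freq: "\<exists>\<^sub>F z in at 0. deriv G z \<noteq> 0" "\<exists>\<^sub>F z in at 0. deriv Gs z \<noteq> 0"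
    "\<exists>\<^sub>F z in at 0. G z - Gs z \<noteq> 0" "\<exists>\<^sub>F z::complex in at 0. z \<noteq> 0"
    "\<exists>\<^sub>F z in at 0. deriv Gs z / deriv G z \<noteq> 0" "\<exists>\<^sub>F z in at 0. z * deriv G z \<noteq> 0"
    "\<exists>\<^sub>F z in at 0. z * deriv G z / (G z - Gs z) \<noteq> 0"
    by (auto intro!: eventually_frequently elim!: eventually_mono)
  obtain c where "(G \<longlongrightarrow> c) (at 0)"
    using G \<open>\<not> is_pole G 0\<close> unfolding meromorphic_at_iff not_essential_def by blast
  then obtain c' where "(deriv G \<longlongrightarrow> c') (at 0)"
    using removable_singularity_deriv G unfolding meromorphic_at_iff by blast
  thus "zorder (deriv G) 0 \<ge> 0"
    using mero(1) freq(1) by (intro zorder_nonneg_of_tendsto) (auto simp: meromorphic_at_iff)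
  have "zorder (\<lambda>z. deriv Gs z / deriv G z) 0 = zorder (deriv Gs) 0 - zorder (deriv G) 0"
    using mero freq by (intro zorder_divide) auto
  with ratio mero(5) freq(5) show "zorder (deriv G) 0 \<le> zorder (deriv Gs) 0"
    and "\<alpha> \<noteq> 0 \<Longrightarrow> zorder (deriv Gs) 0 = zorder (deriv G) 0"
    using zorder_nonneg_of_tendsto zorder_eq_0_iff_tendsto by (force simp: meromorphic_at_iff)+
  have "zorder (\<lambda>z. z * deriv G z / (G z - Gs z)) 0
      = 1 + zorder (deriv G) 0 - zorder (\<lambda>z. G z - Gs z) 0"
    using mero freq by (simp add: zorder_divide zorder_mult zorder_ident_0)
  with lim mero(7) freq(7) show "zorder (\<lambda>z. G z - Gs z) 0 = zorder (deriv G) 0 + 1 \<longleftrightarrow> L \<noteq> 0"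
    using zorder_eq_0_iff_tendsto by (force simp: meromorphic_at_iff)
qed

lemma end_multiplicity_eq:
  assumes "\<not> locally_constant_at_zero G" "\<forall>\<^sub>F z in at 0. deriv Gs z \<noteq> 0"
    and "zorder (deriv G) 0 \<le> zorder (deriv Gs) 0"
  shows "end_multiplicity G Gs = zorder (deriv G) 0 + 1"
proof -
  have "\<not> locally_constant_at_zero Gs"
  proof
    assume "locally_constant_at_zero Gs"
    with assms(2) have "\<forall>\<^sub>F z in at (0::complex). False"
      unfolding locally_constant_at_zero_def by eventually_elim auto
    thus False
      by simp
  qed
  with assms(1,3) show ?thesis
    by (simp add: end_multiplicity_def)
qed

lemma end_exponent_arith:
  fixes \<mu> \<mu>s :: real and \<alpha> L :: complex and n ns k m :: int
  assumes \<mu>_eq: "of_real \<mu> = of_int n - 2 * L" and \<mu>s_eq: "of_real \<mu>s = of_int ns + 2 * \<alpha> * L"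
    and k_eq: "of_int k = (1 - \<alpha>) * L" and k_iff: "k = n + 1 \<longleftrightarrow> L \<noteq> 0"
    and n: "0 \<le> n" "n \<le> ns" "\<alpha> \<noteq> 0 \<Longrightarrow> ns = n"
    and \<alpha>: "cmod \<alpha> \<le> 1" and not_both_nonneg: "\<not> (0 \<le> \<mu> \<and> 0 \<le> \<mu>s)"
    and m: "m = n + 1"
  shows "of_real \<mu> = - (1 + \<alpha>) / (1 - \<alpha>) * of_int m - 1
         \<and> \<alpha> = of_real ((1 + \<mu> + m) / (1 + \<mu> - m))
         \<and> \<mu> \<le> -1 \<and> \<mu> + \<mu>s \<ge> -2 \<and> \<mu>s \<ge> -1"
proof -
  define l where "l = (n - \<mu>) / 2"
  have L: "L = of_real l"
    using \<mu>_eq by (simp add: l_def field_simps)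
  have "L \<noteq> 0"
  proof
    assume "L = 0"
    hence "of_real \<mu> = (of_int n :: complex)" "of_real \<mu>s = (of_int ns :: complex)"
      using \<mu>_eq \<mu>s_eq by simp_all
    hence "\<mu> = n" "\<mu>s = ns"
      by (metis of_real_eq_iff of_real_of_int_eq)+
    with n not_both_nonneg show False
      by simp
  qed
  hence "k = m" "l \<noteq> 0" "real_of_int m \<ge> 1"
    using k_iff m n(1) L by auto
  define a where "a = 1 - m / l"
  have \<alpha>_eq: "\<alpha> = of_real a"
    using k_eq \<open>k = m\<close> \<open>l \<noteq> 0\<close> unfolding L a_def by (simp add: field_simps)
  have "\<bar>a\<bar> \<le> 1"
    using \<alpha> unfolding \<alpha>_eq by simp
  moreover have "a \<noteq> 1"
    using \<open>l \<noteq> 0\<close> \<open>real_of_int m \<ge> 1\<close> by (simp add: a_def)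
  ultimately have a: "-1 \<le> a" "a < 1"
    by auto
  have m_eq: "m = l - a * l"
    using \<open>l \<noteq> 0\<close> by (simp add: a_def algebra_simps)
  hence m_eq': "m = l * (1 - a)"
    by (simp add: algebra_simps)
  have "l > 0"
  proof (rule ccontr)
    assume "\<not> l > 0"
    hence "l * (1 - a) \<le> 0"
      using a by (intro mult_nonpos_nonneg) auto
    with m_eq' \<open>real_of_int m \<ge> 1\<close> show False
      by simp
  qed
  have "l * (1 - a) \<le> l * 2"
    using a \<open>l > 0\<close> by (intro mult_left_mono) auto
  hence "m \<le> 2 * l"
    using m_eq' by simp
  have "(of_real \<mu>s :: complex) = of_real (ns + 2 * a * l)"
    using \<mu>s_eq unfolding \<alpha>_eq L by simp
  hence \<mu>s: "\<mu>s = ns + 2 * a * l"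
    by (simp only: of_real_eq_iff)
  have \<mu>: "\<mu> = m - 1 - 2 * l"
    using m unfolding l_def by (simp add: field_simps)
  have frac: "- (1 + a) / (1 - a) * m = - (1 + a) * l"
    using a(2) unfolding m_eq' by (simp add: field_simps)
  have "\<mu> = - (1 + a) * l - 1"
    using m_eq unfolding \<mu> by (simp add: algebra_simps)
  hence \<mu>_form: "\<mu> = - (1 + a) / (1 - a) * m - 1"
    by (simp only: frac)
  have a_form: "a = (1 + \<mu> + m) / (1 + \<mu> - m)"
  proof -
    have "1 + \<mu> + m = - 2 * (a * l)" "1 + \<mu> - m = - 2 * l"
      using m_eq unfolding \<mu> by simp_all
    thus ?thesis
      using \<open>l > 0\<close> by simp
  qed
  have "\<mu> + \<mu>s = ns - n - 2"
    using m m_eq unfolding \<mu> \<mu>s by simp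
  moreover have "\<mu>s \<ge> -1"
  proof (cases "a = 0")
    case True
    with n show ?thesis
      by (simp add: \<mu>s)
  next
    case False
    hence "ns = n"
      using n(3) \<alpha>_eq by simp
    with \<open>m \<le> 2 * l\<close> show ?thesis
      using m m_eq unfolding \<mu>s by simp
  qed
  moreover have "of_real \<mu> = - (1 + \<alpha>) / (1 - \<alpha>) * of_int m - 1"
    unfolding \<alpha>_eq by (simp add: \<mu>_form)
  moreover have "\<alpha> = of_real ((1 + \<mu> + m) / (1 + \<mu> - m))"
    using a_form by (simp add: \<alpha>_eq)
  moreover have "\<mu> \<le> -1"
    using \<open>m \<le> 2 * l\<close> unfolding \<mu> by simp
  ultimately show ?thesis
    using n(2) by simp
qed

theorem proposition1p15:
  fixes E :: "complex \<Rightarrow> complex^2^2"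
    and om th :: "complex \<Rightarrow> complex"
    and G Gs :: "complex \<Rightarrow> complex"
    and om1 th1 :: "complex \<Rightarrow> complex"
    and \<mu> \<mu>s :: real
    and m :: int
    and \<alpha> :: complex
  assumes E_holo: "\<And>i j. (\<lambda>w. E w $ i $ j) holomorphic_on left_halfplane"
    and E_SL2: "\<And>w. w \<in> left_halfplane \<Longrightarrow> det (E w) = 1"
    and E_canonical: "\<And>w i j. w \<in> left_halfplane \<Longrightarrow>
          ((\<lambda>v. E v $ i $ j) has_field_derivative ((E w ** canon_mat (om w) (th w)) $ i $ j)) (at w)"
    and f_single_valued: "\<And>w. w \<in> left_halfplane \<Longrightarrow>
          E (w + 2 * pi * \<i>) ** adj2 (E (w + 2 * pi * \<i>)) = E w ** adj2 (E w)"
    and front: "\<And>w. w \<in> left_halfplane \<Longrightarrow> om w \<noteq> 0 \<or> th w \<noteq> 0"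
    and G_def: "\<And>w. w \<in> left_halfplane \<Longrightarrow> G (exp w) = E w $ 1 $ 1 / E w $ 2 $ 1"
    and Gs_def: "\<And>w. w \<in> left_halfplane \<Longrightarrow> Gs (exp w) = E w $ 1 $ 2 / E w $ 2 $ 2"
    and complete: "complete_at_zero (metric_density om th)"
    and finite_curv: "finite_total_curvature_at_zero (metric_density om th)"
    and om1_holo: "om1 holomorphic_on ball 0 1" and om1_0: "om1 0 \<noteq> 0"
    and th1_holo: "th1 holomorphic_on ball 0 1" and th1_0: "th1 0 \<noteq> 0"
    and om_form: "\<And>w. w \<in> left_halfplane \<Longrightarrow> om w = exp (of_real \<mu> * w) * om1 (exp w) * exp w"
    and th_form: "\<And>w. w \<in> left_halfplane \<Longrightarrow> th w = exp (of_real \<mu>s * w) * th1 (exp w) * exp w"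
    and G_regular: "isolated_singularity_at G 0" "not_essential G 0"
    and Gs_regular: "isolated_singularity_at Gs 0" "not_essential Gs 0"
    and G_normalised: "\<not> is_pole G 0"
    and mult: "m = end_multiplicity G Gs"
    and dominant: "\<not> locally_constant_at_zero G"
          "((\<lambda>z. deriv Gs z / deriv G z) \<longlongrightarrow> \<alpha>) (at 0)" "cmod \<alpha> \<le> 1"
  shows "complex_of_real \<mu> = - (1 + \<alpha>) / (1 - \<alpha>) * of_int m - 1
         \<and> \<alpha> = complex_of_real ((1 + \<mu> + m) / (1 + \<mu> - m))
         \<and> \<mu> \<le> -1 \<and> \<mu> + \<mu>s \<ge> -2 \<and> \<mu>s \<ge> -1"
proof -
  interpret canonical_lift E om th G Gs om1 th1 \<mu> \<mu>s
    by unfold_locales (fact E_canonical E_SL2 G_def Gs_def om1_holo om1_0 th1_holo th1_0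
        om_form th_form G_regular(1) Gs_regular(1))+
  have mero: "G meromorphic_on {0}" "Gs meromorphic_on {0}"
    using G_regular Gs_regular by (simp_all add: meromorphic_at_iff)
  have analytic: "om1 analytic_on {0}" "th1 analytic_on {0}"
    using om1_holo th1_holo by (auto intro: holomorphic_on_imp_analytic_at)
  note relations = gauss_map_relations_near_end
  obtain L where lim: "((\<lambda>z. z * deriv G z / (G z - Gs z)) \<longlongrightarrow> L) (at 0)"
    and \<mu>_eq: "of_real \<mu> = of_int (zorder (deriv G) 0) - 2 * L"
    and \<mu>s_eq: "of_real \<mu>s = of_int (zorder (deriv Gs) 0) + 2 * \<alpha> * L"
    and k_eq: "of_int (zorder (\<lambda>z. G z - Gs z) 0) = (1 - \<alpha>) * L"
    using gauss_map_log_limits[OF mero analytic(1) om1_0 analytic(2) th1_0 relations dominant(2)] .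
  have nonzero: "\<forall>\<^sub>F z in at 0. deriv G z \<noteq> 0 \<and> deriv Gs z \<noteq> 0 \<and> G z \<noteq> Gs z"
    using relations by (auto elim: eventually_mono)
  note orders = gauss_map_order_bounds[OF mero G_normalised nonzero dominant(2) lim]
  have "\<forall>\<^sub>F z in at 0. deriv Gs z \<noteq> 0"
    using nonzero by (auto elim: eventually_mono)
  with mult dominant(1) orders(2) have "m = zorder (deriv G) 0 + 1"
    by (simp add: end_multiplicity_eq)
  moreover have "\<not> (0 \<le> \<mu> \<and> 0 \<le> \<mu>s)"
    using not_complete_at_zero_if_exponents_nonneg[OF _ _ om1_holo th1_holo om_form th_form]
      complete by blast
  ultimately show ?thesis
    using end_exponent_arith[OF \<mu>_eq \<mu>s_eq k_eq orders(4,1-3) dominant(3)] by blast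
qed

end
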